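(* Let $d\ge1$, $L_{2d}=2U\oplus 2E_8(-1)\oplus\langle -2d\rangle$, and let $r\in L_{2d}$ be a primitive vector with $r^2=-2d$. If $\mathrm{div}(r)=2d$, then $r^\perp_{L_{2d}}\cong 2U\oplus 2E_8(-1)$. If $\mathrm{div}(r)=d$, then either $r^\perp_{L_{2d}}\cong U\oplus 2E_8(-1)\oplus\langle 2\rangle\oplus\langle -2\rangle$ or $r^\perp_{L_{2d}}\cong U\oplus 2E_8(-1)\oplus U(2)$.
   Context: $U$ is the hyperbolic plane, $U(2)$ is $U$ with form multiplied by $2$, $E_8(-1)$ is the negative definite $E_8$ lattice, $\langle m\rangle$ is the rank one lattice with generator of square $m$. For $l\in L$, $\mathrm{div}(l)$ is the positive generator of the ideal $(l,L)\subset\mathbb Z$; $r^\perp_{L_{2d}}$ is the orthogonal complement of $r$ in $L_{2d}$. *)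

theory Defs
  imports Main
begin

text \<open>An integral lattice given by a Gram matrix: a pair (n, G), the lattice being
  Z^n (vectors nat => int vanishing from index n on) with bilinear form G.\<close>

type_synonym glat = "nat \<times> (nat \<Rightarrow> nat \<Rightarrow> int)"

definition lvecs :: "glat \<Rightarrow> (nat \<Rightarrow> int) set" where
  "lvecs L = {v. \<forall>i\<ge>fst L. v i = 0}"

definition bil :: "glat \<Rightarrow> (nat \<Rightarrow> int) \<Rightarrow> (nat \<Rightarrow> int) \<Rightarrow> int" where
  "bil L x y = (\<Sum>i<fst L. \<Sum>j<fst L. x i * snd L i j * y j)"

definition osum :: "glat \<Rightarrow> glat \<Rightarrow> glat" (infixr "\<oplus>" 65) where
  "osum L M = (fst L + fst M,
     (\<lambda>i j. if i < fst L \<and> j < fst L then snd L i j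
            else if fst L \<le> i \<and> i < fst L + fst M \<and> fst L \<le> j \<and> j < fst L + fst M
                 then snd M (i - fst L) (j - fst L) else 0))"

definition Hyp :: glat where
  "Hyp = (2, (\<lambda>i j. if i < 2 \<and> j < 2 \<and> i \<noteq> j then 1 else 0))"

definition Hyp2 :: glat where
  "Hyp2 = (2, (\<lambda>i j. if i < 2 \<and> j < 2 \<and> i \<noteq> j then 2 else 0))"

definition rk1 :: "int \<Rightarrow> glat" where
  "rk1 m = (1, (\<lambda>i j. if i = 0 \<and> j = 0 then m else 0))"

text \<open>E8(-1): negative of the E8 Cartan matrix; Dynkin diagram is the chain
  0-1-2-3-4-5-6 with node 7 attached to node 4.\<close>
definition e8_adj :: "nat \<Rightarrow> nat \<Rightarrow> bool" where
  "e8_adj i j = ((i < 7 \<and> j < 7 \<and> (i = j + 1 \<or> j = i + 1)) \<or> (i = 4 \<and> j = 7) \<or> (i = 7 \<and> j = 4))"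

definition E8neg :: glat where
  "E8neg = (8, (\<lambda>i j. if i < 8 \<and> j < 8 then (if i = j then -2 else if e8_adj i j then 1 else 0) else 0))"

definition L2d :: "int \<Rightarrow> glat" where
  "L2d d = Hyp \<oplus> Hyp \<oplus> E8neg \<oplus> E8neg \<oplus> rk1 (-2 * d)"

definition primitive :: "glat \<Rightarrow> (nat \<Rightarrow> int) \<Rightarrow> bool" where
  "primitive L r \<longleftrightarrow> r \<in> lvecs L \<and> r \<noteq> (\<lambda>_. 0) \<and>
     (\<forall>k::int. \<forall>v\<in>lvecs L. r = (\<lambda>i. k * v i) \<longrightarrow> k = 1 \<or> k = -1)"

definition ldiv :: "glat \<Rightarrow> (nat \<Rightarrow> int) \<Rightarrow> int" where
  "ldiv L r = Gcd {bil L r x | x. x \<in> lvecs L}"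

definition perp :: "glat \<Rightarrow> (nat \<Rightarrow> int) \<Rightarrow> (nat \<Rightarrow> int) set" where
  "perp L r = {x \<in> lvecs L. bil L r x = 0}"

text \<open>A subgroup S of the lattice L, with the restricted form, is isometric to the
  lattice M: there is a Z-basis f 0, ..., f (m-1) of S whose Gram matrix is that of M.\<close>
definition sub_iso :: "glat \<Rightarrow> (nat \<Rightarrow> int) set \<Rightarrow> glat \<Rightarrow> bool" where
  "sub_iso L S M \<longleftrightarrow> (\<exists>f :: nat \<Rightarrow> nat \<Rightarrow> int.
      (\<forall>i<fst M. f i \<in> S) \<and>
      (\<forall>i<fst M. \<forall>j<fst M. bil L (f i) (f j) = snd M i j) \<and>
      (\<forall>x\<in>S. \<exists>!c. c \<in> lvecs M \<and> x = (\<lambda>k. \<Sum>i<fst M. c i * f i k)))"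

end

theory Submission
  imports Defs "HOL-Library.Function_Algebras" "HOL-Combinatorics.Permutations"
begin

type_synonym vec = "nat \<Rightarrow> int"

definition vscale :: "int \<Rightarrow> vec \<Rightarrow> vec" where
  "vscale c x = (\<lambda>i. c * x i)"

definition unit_vec :: "nat \<Rightarrow> vec" where
  "unit_vec i = (\<lambda>j. if j = i then 1 else 0)"

definition sym_gram :: "glat \<Rightarrow> bool" where
  "sym_gram L \<longleftrightarrow> (\<forall>i j. snd L i j = snd L j i)"

definition bounded_gram :: "glat \<Rightarrow> bool" where
  "bounded_gram L \<longleftrightarrow> (\<forall>i j. fst L \<le> i \<or> fst L \<le> j \<longrightarrow> snd L i j = 0)"

lemma vscale_apply [simp]: "vscale c x i = c * x i"
  by (simp add: vscale_def)

lemma unit_vec_apply: "unit_vec i j = (if j = i then 1 else 0)"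
  by (simp add: unit_vec_def)

lemma bil_add_left: "bil L (x + y) z = bil L x z + bil L y z"
  by (simp add: bil_def sum.distrib algebra_simps)

lemma bil_add_right: "bil L z (x + y) = bil L z x + bil L z y"
  by (simp add: bil_def sum.distrib algebra_simps)

lemma bil_diff_left: "bil L (x - y) z = bil L x z - bil L y z"
  by (simp add: bil_def sum_subtractf algebra_simps)

lemma bil_diff_right: "bil L z (x - y) = bil L z x - bil L z y"
  by (simp add: bil_def sum_subtractf algebra_simps)

lemma bil_vscale_left: "bil L (vscale c x) z = c * bil L x z"
  by (simp add: bil_def sum_distrib_left algebra_simps)

lemma bil_vscale_right: "bil L z (vscale c x) = c * bil L z x"
  by (simp add: bil_def sum_distrib_left algebra_simps)

lemma bil_uminus_left: "bil L (- x) z = - bil L x z"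
  by (simp add: bil_def sum_negf)

lemma bil_uminus_right: "bil L z (- x) = - bil L z x"
  by (simp add: bil_def sum_negf)

lemma bil_zero_left: "bil L 0 z = 0"
  by (simp add: bil_def)

lemma bil_zero_right: "bil L z 0 = 0"
  by (simp add: bil_def)

lemmas bil_linear = bil_add_left bil_add_right bil_diff_left bil_diff_right
  bil_vscale_left bil_vscale_right bil_uminus_left bil_uminus_right bil_zero_left bil_zero_right

lemma bil_commute: "sym_gram L \<Longrightarrow> bil L x y = bil L y x"
  unfolding bil_def sym_gram_def by (subst sum.swap) (simp add: algebra_simps)

lemma bil_unit_vec_right:
  "j < fst L \<Longrightarrow> bil L x (unit_vec j) = (\<Sum>i<fst L. x i * snd L i j)"
  by (simp add: bil_def unit_vec_def if_distrib cong: if_cong)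

lemma bil_unit_vec_unit_vec:
  assumes "i < fst L" "j < fst L"
  shows "bil L (unit_vec i) (unit_vec j) = snd L i j"
proof -
  have "(\<Sum>k<fst L. unit_vec i k * snd L k j) = (\<Sum>k\<in>{i}. snd L k j)"
    using assms(1) by (intro sum.mono_neutral_cong_right) (auto simp: unit_vec_def)
  then show ?thesis
    using assms by (simp add: bil_unit_vec_right)
qed

lemma bil_expand_right: "bil L y x = (\<Sum>j<fst L. x j * bil L y (unit_vec j))"
proof -
  have "bil L y x = (\<Sum>j<fst L. \<Sum>i<fst L. y i * snd L i j * x j)"
    unfolding bil_def by (rule sum.swap)
  also have "\<dots> = (\<Sum>j<fst L. x j * bil L y (unit_vec j))"
    by (rule sum.cong) (auto simp: bil_unit_vec_right sum_distrib_left algebra_simps)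
  finally show ?thesis .
qed

lemma bil_self_even:
  assumes "sym_gram L" and "\<And>i. even (snd L i i)"
  shows "even (bil L x x)"
proof -
  have sym: "snd L i j = snd L j i" for i j
    using assms(1) by (simp add: sym_gram_def)
  have "even (\<Sum>i<n. \<Sum>j<n. x i * snd L i j * x j)" for n
  proof (induction n)
    case (Suc n)
    have split: "(\<Sum>i<Suc n. \<Sum>j<Suc n. x i * snd L i j * x j) =
        (\<Sum>i<n. \<Sum>j<n. x i * snd L i j * x j) + 2 * (\<Sum>i<n. x i * snd L i n * x n)
        + x n * snd L n n * x n"
      using sym by (simp add: sum.distrib sum_distrib_left algebra_simps)
    show ?case
      unfolding split using Suc assms(2)[of n] by simp
  qed simp
  then show ?thesis
    by (simp add: bil_def)
qed

lemma bil_self_nonzero_coord: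
  assumes "bil L r r \<noteq> 0"
  obtains k where "k < fst L" "r k \<noteq> 0" "bil L r (unit_vec k) \<noteq> 0"
proof -
  have "(\<Sum>j<fst L. r j * bil L r (unit_vec j)) \<noteq> 0"
    using assms by (simp add: bil_expand_right[of L r r])
  then obtain k where "k < fst L" "r k * bil L r (unit_vec k) \<noteq> 0"
    by (meson lessThan_iff sum.neutral)
  then show ?thesis
    using that by simp
qed

lemma lvecs_add: "x \<in> lvecs L \<Longrightarrow> y \<in> lvecs L \<Longrightarrow> x + y \<in> lvecs L"
  and lvecs_diff: "x \<in> lvecs L \<Longrightarrow> y \<in> lvecs L \<Longrightarrow> x - y \<in> lvecs L"
  and lvecs_uminus: "x \<in> lvecs L \<Longrightarrow> - x \<in> lvecs L"
  and lvecs_vscale: "x \<in> lvecs L \<Longrightarrow> vscale c x \<in> lvecs L"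
  and lvecs_zero: "0 \<in> lvecs L"
  and lvecs_unit_vec: "i < fst L \<Longrightarrow> unit_vec i \<in> lvecs L"
  by (simp_all add: lvecs_def unit_vec_def)

lemma snd_osum:
  assumes "bounded_gram B"
  shows "snd (A \<oplus> B) i j =
    (if i < fst A \<and> j < fst A then snd A i j
     else if fst A \<le> i \<and> fst A \<le> j then snd B (i - fst A) (j - fst A) else 0)"
  using assms unfolding osum_def bounded_gram_def by (auto simp: not_less)

lemma fst_osum: "fst (A \<oplus> B) = fst A + fst B"
  by (simp add: osum_def)

lemma bounded_gram_osum: "bounded_gram A \<Longrightarrow> bounded_gram B \<Longrightarrow> bounded_gram (A \<oplus> B)"
  unfolding bounded_gram_def osum_def by auto

lemma bounded_gram_Hyp: "bounded_gram Hyp"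
  and bounded_gram_Hyp2: "bounded_gram Hyp2"
  and bounded_gram_E8neg: "bounded_gram E8neg"
  and bounded_gram_rk1: "bounded_gram (rk1 m)"
  by (simp_all add: bounded_gram_def Hyp_def Hyp2_def E8neg_def rk1_def)

lemma fst_Hyp: "fst Hyp = 2"
  and fst_Hyp2: "fst Hyp2 = 2"
  and fst_E8neg: "fst E8neg = 8"
  and fst_rk1: "fst (rk1 m) = 1"
  by (simp_all add: Hyp_def Hyp2_def E8neg_def rk1_def)

lemma snd_Hyp: "snd Hyp i j = (if i < 2 \<and> j < 2 \<and> i \<noteq> j then 1 else 0)"
  by (simp add: Hyp_def)

lemma snd_Hyp2: "snd Hyp2 i j = (if i < 2 \<and> j < 2 \<and> i \<noteq> j then 2 else 0)"
  by (simp add: Hyp2_def)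

lemma snd_rk1: "snd (rk1 m) i j = (if i = 0 \<and> j = 0 then m else 0)"
  by (simp add: rk1_def)

lemmas osum_simps = snd_osum fst_osum bounded_gram_osum bounded_gram_Hyp bounded_gram_Hyp2
  bounded_gram_E8neg bounded_gram_rk1 fst_Hyp fst_Hyp2 fst_E8neg fst_rk1

lemma osum_assoc: "(A \<oplus> B) \<oplus> C = A \<oplus> (B \<oplus> C)"
proof -
  obtain a G where A: "A = (a, G)" by fastforce
  obtain b H where B: "B = (b, H)" by fastforce
  obtain c K where C: "C = (c, K)" by fastforce
  have "snd ((A \<oplus> B) \<oplus> C) i j = snd (A \<oplus> (B \<oplus> C)) i j" for i j
  proof -
    have "i < a \<or> a \<le> i \<and> i < a + b \<or> a + b \<le> i \<and> i < a + b + c \<or> a + b + c \<le> i"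
      "j < a \<or> a \<le> j \<and> j < a + b \<or> a + b \<le> j \<and> j < a + b + c \<or> a + b + c \<le> j"
      by linarith+
    then show ?thesis
      unfolding A B C osum_def by (elim disjE conjE) (simp_all add: less_diff_conv2 le_diff_conv2 diff_diff_left)
  qed
  then show ?thesis
    by (simp add: osum_def fun_eq_iff add.assoc)
qed
definition lin_comb :: "(nat \<Rightarrow> int) \<Rightarrow> (nat \<Rightarrow> vec) \<Rightarrow> nat \<Rightarrow> vec" where
  "lin_comb c f n = (\<lambda>k. \<Sum>i<n. c i * f i k)"

lemma lin_comb_0: "lin_comb c f 0 = 0"
  by (simp add: lin_comb_def fun_eq_iff)

lemma lin_comb_Suc: "lin_comb c f (Suc n) = lin_comb c f n + vscale (c n) (f n)"
  by (simp add: lin_comb_def fun_eq_iff)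

lemma lin_comb_lvecs: "(\<And>i. i < n \<Longrightarrow> f i \<in> lvecs L) \<Longrightarrow> lin_comb c f n \<in> lvecs L"
  by (induction n) (auto simp: lin_comb_0 lin_comb_Suc lvecs_zero lvecs_add lvecs_vscale)

definition int_linear :: "(vec \<Rightarrow> vec) \<Rightarrow> bool" where
  "int_linear g \<longleftrightarrow> (\<forall>x y. g (x + y) = g x + g y) \<and> (\<forall>c x. g (vscale c x) = vscale c (g x))"

lemma int_linear_lin_comb:
  assumes "int_linear g"
  shows "g (lin_comb c f n) = lin_comb c (\<lambda>i. g (f i)) n"
proof (induction n)
  case 0
  have "g 0 = g 0 + g 0"
    using assms by (metis add_0 int_linear_def)
  then have "g 0 = 0"
    by simp
  then show ?case
    by (simp only: lin_comb_0)
next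
  case (Suc n)
  have "g (lin_comb c f (Suc n)) = g (lin_comb c f n) + vscale (c n) (g (f n))"
    using assms unfolding int_linear_def lin_comb_Suc by metis
  then show ?case
    using Suc.IH by (simp only: lin_comb_Suc)
qed

definition isometry :: "glat \<Rightarrow> (vec \<Rightarrow> vec) \<Rightarrow> (vec \<Rightarrow> vec) \<Rightarrow> bool" where
  "isometry L g h \<longleftrightarrow> int_linear g \<and> int_linear h \<and>
     (\<forall>x\<in>lvecs L. g x \<in> lvecs L \<and> h x \<in> lvecs L \<and> h (g x) = x \<and> g (h x) = x) \<and>
     (\<forall>x\<in>lvecs L. \<forall>y\<in>lvecs L. bil L (g x) (g y) = bil L x y)"

lemma isometryD:
  assumes "isometry L g h" "x \<in> lvecs L"
  shows "g x \<in> lvecs L" "h x \<in> lvecs L" "h (g x) = x" "g (h x) = x"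
  using assms unfolding isometry_def by blast+

lemma isometry_bil:
  "isometry L g h \<Longrightarrow> x \<in> lvecs L \<Longrightarrow> y \<in> lvecs L \<Longrightarrow> bil L (g x) (g y) = bil L x y"
  unfolding isometry_def by blast

lemma isometry_converse:
  assumes "isometry L g h"
  shows "isometry L h g"
  using assms unfolding isometry_def by metis

lemma isometry_comp:
  "isometry L g1 h1 \<Longrightarrow> isometry L g2 h2 \<Longrightarrow> isometry L (g2 \<circ> g1) (h1 \<circ> h2)"
  by (simp add: isometry_def int_linear_def)

lemma isometry_uminus: "isometry L uminus uminus"
  by (simp add: isometry_def int_linear_def bil_linear lvecs_uminus fun_eq_iff)

lemma lvecs_comp_permutes:
  assumes "x \<in> lvecs L" "\<tau> permutes {..<fst L}"
  shows "x \<circ> \<tau> \<in> lvecs L"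
proof -
  have "\<tau> i \<ge> fst L" if "i \<ge> fst L" for i
    using permutes_in_image[OF assms(2), of i] that by simp
  then show ?thesis
    using assms(1) by (simp add: lvecs_def)
qed

lemma isometry_permute_coords:
  assumes \<sigma>: "\<sigma> permutes {..<fst L}" and gram: "\<And>i j. snd L (\<sigma> i) (\<sigma> j) = snd L i j"
  shows "isometry L (\<lambda>x. x \<circ> \<sigma>) (\<lambda>x. x \<circ> inv \<sigma>)"
proof -
  have inv: "inv \<sigma> permutes {..<fst L}"
    using \<sigma> by (rule permutes_inv)
  have bil: "bil L (x \<circ> \<sigma>) (y \<circ> \<sigma>) = bil L x y" for x y
  proof -
    have "bil L (x \<circ> \<sigma>) (y \<circ> \<sigma>) = (\<Sum>i<fst L. \<Sum>j<fst L. x (\<sigma> i) * snd L (\<sigma> i) (\<sigma> j) * y (\<sigma> j))"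
      by (simp add: bil_def gram)
    also have "\<dots> = bil L x y"
      unfolding bil_def
      by (subst (2) sum.permute[OF \<sigma>], subst sum.permute[OF \<sigma>]) (simp add: comp_def)
    finally show ?thesis .
  qed
  have "int_linear (\<lambda>x. x \<circ> \<tau>)" for \<tau>
    by (simp add: int_linear_def fun_eq_iff)
  then show ?thesis
    unfolding isometry_def using bil lvecs_comp_permutes[OF _ \<sigma>] lvecs_comp_permutes[OF _ inv]
    by (simp add: comp_assoc permutes_inv_o[OF \<sigma>])
qed

definition in_orbit :: "glat \<Rightarrow> vec \<Rightarrow> vec \<Rightarrow> bool" where
  "in_orbit L x y \<longleftrightarrow> (\<exists>g h. isometry L g h \<and> g x = y)"

lemma in_orbit_refl: "in_orbit L x x"
  unfolding in_orbit_def by (rule exI[of _ id], rule exI[of _ id]) (simp add: isometry_def int_linear_def)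

lemma in_orbit_step: "in_orbit L x y \<Longrightarrow> isometry L g h \<Longrightarrow> in_orbit L x (g y)"
  unfolding in_orbit_def by (metis comp_apply isometry_comp)

lemma in_orbit_lvecs: "in_orbit L x y \<Longrightarrow> x \<in> lvecs L \<Longrightarrow> y \<in> lvecs L"
  unfolding in_orbit_def by (metis isometryD(1))

lemma in_orbit_bil: "in_orbit L x y \<Longrightarrow> x \<in> lvecs L \<Longrightarrow> bil L y y = bil L x x"
  unfolding in_orbit_def by (metis isometry_bil)

lemma in_orbit_ldiv:
  assumes "in_orbit L x y" "x \<in> lvecs L"
  shows "ldiv L y = ldiv L x"
proof -
  obtain g h where g: "isometry L g h" "g x = y"
    using assms(1) unfolding in_orbit_def by auto
  have "{bil L y z |z. z \<in> lvecs L} = {bil L x z |z. z \<in> lvecs L}"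
  proof -
    have "bil L y z = bil L x (h z)" "h z \<in> lvecs L" if "z \<in> lvecs L" for z
      using g assms(2) that by (metis isometryD isometry_bil)+
    moreover have "bil L x z = bil L y (g z)" "g z \<in> lvecs L" if "z \<in> lvecs L" for z
      using g assms(2) that by (metis isometryD isometry_bil)+
    ultimately show ?thesis
      by blast
  qed
  then show ?thesis
    by (simp add: ldiv_def)
qed

lemma perp_isometry_image:
  assumes g: "isometry L g h" and r: "r \<in> lvecs L"
  shows "g ` perp L r = perp L (g r)"
proof (intro equalityI subsetI)
  fix y assume "y \<in> g ` perp L r"
  then obtain x where "x \<in> lvecs L" "bil L r x = 0" "y = g x"
    by (auto simp: perp_def)
  then show "y \<in> perp L (g r)"
    using g r by (simp add: perp_def isometryD isometry_bil)
next
  fix y assume "y \<in> perp L (g r)"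
  then have y: "y \<in> lvecs L" "bil L (g r) y = 0"
    by (auto simp: perp_def)
  then have "bil L r (h y) = 0"
    using g r by (metis isometryD isometry_bil)
  then have "h y \<in> perp L r"
    using g y by (simp add: perp_def isometryD)
  moreover have "y = g (h y)"
    using g y by (simp add: isometryD)
  ultimately show "y \<in> g ` perp L r"
    by blast
qed

lemma sub_iso_isometry_image:
  assumes g: "isometry L g h" and S: "S \<subseteq> lvecs L" and "sub_iso L S M"
  shows "sub_iso L (g ` S) M"
proof -
  obtain f where fS: "\<forall>i<fst M. f i \<in> S"
    and gram: "\<forall>i<fst M. \<forall>j<fst M. bil L (f i) (f j) = snd M i j"
    and coords: "\<forall>x\<in>S. \<exists>!c. c \<in> lvecs M \<and> x = lin_comb c f (fst M)"
    using assms(3) unfolding sub_iso_def lin_comb_def by blast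
  have f_lvecs: "f i \<in> lvecs L" if "i < fst M" for i
    using fS S that by blast
  have g_lin_comb: "g (lin_comb c f (fst M)) = lin_comb c (\<lambda>i. g (f i)) (fst M)" for c
    using g by (simp add: int_linear_lin_comb isometry_def)
  have coords_image: "\<exists>!c. c \<in> lvecs M \<and> g x = lin_comb c (\<lambda>i. g (f i)) (fst M)"
    if x: "x \<in> S" for x
  proof -
    have ex1: "\<exists>!c. c \<in> lvecs M \<and> x = lin_comb c f (fst M)"
      using coords x by blast
    then obtain c where c: "c \<in> lvecs M" "x = lin_comb c f (fst M)"
      by blast
    have uniq: "c' = c" if "c' \<in> lvecs M" "x = lin_comb c' f (fst M)" for c'
      using ex1 c that by blast
    have "c' = c" if "c' \<in> lvecs M" "g x = lin_comb c' (\<lambda>i. g (f i)) (fst M)" for c'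
    proof (rule uniq[OF that(1)])
      have "x = h (g x)"
        using g x S by (simp add: isometryD subset_iff)
      also have "\<dots> = h (g (lin_comb c' f (fst M)))"
        using that(2) by (simp add: g_lin_comb)
      also have "\<dots> = lin_comb c' f (fst M)"
        using g lin_comb_lvecs[OF f_lvecs] by (simp add: isometryD)
      finally show "x = lin_comb c' f (fst M)" .
    qed
    then show ?thesis
      using c g_lin_comb by blast
  qed
  show ?thesis
    unfolding sub_iso_def
  proof (intro exI[of _ "\<lambda>i. g (f i)"] conjI allI impI ballI)
    show "g (f i) \<in> g ` S" if "i < fst M" for i
      using fS that by blast
    show "bil L (g (f i)) (g (f j)) = snd M i j" if "i < fst M" "j < fst M" for i j
      using g gram f_lvecs that by (simp add: isometry_bil)
    fix y assume "y \<in> g ` S"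
    then obtain x where "x \<in> S" "y = g x"
      by blast
    then show "\<exists>!c. c \<in> lvecs M \<and> y = (\<lambda>k. \<Sum>i<fst M. c i * g (f i) k)"
      using coords_image unfolding lin_comb_def by simp
  qed
qed

lemma sub_iso_perp_in_orbit:
  assumes "in_orbit L r s" "r \<in> lvecs L" "sub_iso L (perp L s) M"
  shows "sub_iso L (perp L r) M"
proof -
  obtain g h where g: "isometry L g h" "g r = s"
    using assms(1) unfolding in_orbit_def by auto
  have h: "isometry L h g"
    using g(1) by (rule isometry_converse)
  have "s \<in> lvecs L" "h s = r"
    using g assms(2) unfolding isometry_def by auto
  then have "h ` perp L s = perp L r"
    using perp_isometry_image[OF h] by simp
  moreover have "perp L s \<subseteq> lvecs L"
    by (auto simp: perp_def)
  ultimately show ?thesis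
    using sub_iso_isometry_image[OF h _ assms(3)] by simp
qed

lemma lin_comb_permute:
  assumes "\<sigma> permutes {..<n}"
  shows "lin_comb (c \<circ> \<sigma>) (f \<circ> \<sigma>) n = lin_comb c f n"
proof
  fix k
  show "lin_comb (c \<circ> \<sigma>) (f \<circ> \<sigma>) n k = lin_comb c f n k"
    using sum.permute[OF assms, of "\<lambda>i. c i * f i k"] by (simp add: lin_comb_def)
qed

lemma sub_iso_permute:
  assumes "sub_iso L S M" and \<sigma>: "\<sigma> permutes {..<fst M}"
  shows "sub_iso L S (fst M, \<lambda>i j. snd M (\<sigma> i) (\<sigma> j))"
proof -
  obtain f where fS: "\<forall>i<fst M. f i \<in> S"
    and gram: "\<forall>i<fst M. \<forall>j<fst M. bil L (f i) (f j) = snd M i j"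
    and coords: "\<forall>x\<in>S. \<exists>!c. c \<in> lvecs M \<and> x = lin_comb c f (fst M)"
    using assms(1) unfolding sub_iso_def lin_comb_def by blast
  have \<sigma>_less: "\<sigma> i < fst M" if "i < fst M" for i
    using permutes_in_image[OF \<sigma>] that by simp
  have inv: "inv \<sigma> permutes {..<fst M}"
    using \<sigma> by (rule permutes_inv)
  have coords': "\<exists>!c. c \<in> lvecs M \<and> x = lin_comb c (f \<circ> \<sigma>) (fst M)" if "x \<in> S" for x
  proof -
    have ex1: "\<exists>!c. c \<in> lvecs M \<and> x = lin_comb c f (fst M)"
      using coords that by blast
    then obtain c where c: "c \<in> lvecs M" "x = lin_comb c f (fst M)"
      by blast
    have uniq: "c' = c" if "c' \<in> lvecs M" "x = lin_comb c' f (fst M)" for c'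
      using ex1 c that by blast
    have "c' = c \<circ> \<sigma>" if "c' \<in> lvecs M" "x = lin_comb c' (f \<circ> \<sigma>) (fst M)" for c'
    proof -
      have "x = lin_comb (c' \<circ> inv \<sigma>) f (fst M)"
        using that(2) lin_comb_permute[OF \<sigma>, of "c' \<circ> inv \<sigma>" f]
        by (simp add: comp_assoc permutes_inv_o[OF \<sigma>])
      then have "c' \<circ> inv \<sigma> = c"
        using uniq lvecs_comp_permutes[OF that(1) inv] by blast
      then show ?thesis
        by (metis comp_assoc comp_id permutes_inv_o(2)[OF \<sigma>])
    qed
    moreover have "x = lin_comb (c \<circ> \<sigma>) (f \<circ> \<sigma>) (fst M)"
      using c(2) lin_comb_permute[OF \<sigma>] by simp
    ultimately show ?thesis
      using lvecs_comp_permutes[OF c(1) \<sigma>] by blast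
  qed
  show ?thesis
    unfolding sub_iso_def
  proof (intro exI[of _ "f \<circ> \<sigma>"] conjI allI impI ballI)
    show "(f \<circ> \<sigma>) i \<in> S" if "i < fst (fst M, \<lambda>i j. snd M (\<sigma> i) (\<sigma> j))" for i
      using fS \<sigma>_less that by simp
    show "bil L ((f \<circ> \<sigma>) i) ((f \<circ> \<sigma>) j) = snd (fst M, \<lambda>i j. snd M (\<sigma> i) (\<sigma> j)) i j"
      if "i < fst (fst M, \<lambda>i j. snd M (\<sigma> i) (\<sigma> j))" "j < fst (fst M, \<lambda>i j. snd M (\<sigma> i) (\<sigma> j))"
      for i j
      using gram \<sigma>_less that by simp
    fix x assume "x \<in> S"
    then show "\<exists>!c. c \<in> lvecs (fst M, \<lambda>i j. snd M (\<sigma> i) (\<sigma> j)) \<and>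
        x = (\<lambda>k. \<Sum>i<fst (fst M, \<lambda>i j. snd M (\<sigma> i) (\<sigma> j)). c i * (f \<circ> \<sigma>) i k)"
      using coords' unfolding lin_comb_def lvecs_def by simp
  qed
qed

lemma sub_iso_osum_commute:
  assumes "sub_iso L S (A \<oplus> B)"
  shows "sub_iso L S (B \<oplus> A)"
proof -
  define a b where "a = fst A" and "b = fst B"
  define \<sigma> where "\<sigma> i = (if i < b then i + a else if i < a + b then i - b else i)" for i
  define \<tau> where "\<tau> i = (if i < a then i + b else if i < a + b then i - a else i)" for i
  have "bij_betw \<sigma> {..<a + b} {..<a + b}"
    by (rule bij_betw_byWitness[of _ \<tau>]) (auto simp: \<sigma>_def \<tau>_def)
  then have "\<sigma> permutes {..<fst (A \<oplus> B)}"
    by (intro bij_imp_permutes) (auto simp: \<sigma>_def a_def b_def osum_def)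
  moreover have "B \<oplus> A = (fst (A \<oplus> B), \<lambda>i j. snd (A \<oplus> B) (\<sigma> i) (\<sigma> j))"
    unfolding osum_def by (auto simp: \<sigma>_def a_def b_def fun_eq_iff)
  ultimately show ?thesis
    using sub_iso_permute[OF assms] by simp
qed

lemma ldiv_dvd_bil: "z \<in> lvecs L \<Longrightarrow> ldiv L y dvd bil L y z"
  unfolding ldiv_def by (rule Gcd_dvd) blast

lemma ldiv_eqI:
  assumes "0 \<le> m" "z \<in> lvecs L" "bil L y z = m"
    and "\<And>k. k < fst L \<Longrightarrow> m dvd bil L y (unit_vec k)"
  shows "ldiv L y = m"
  unfolding ldiv_def
proof (rule Gcd_eqI)
  show "normalize m = m"
    using assms(1) by simp
  show "c dvd m" if "\<And>b. b \<in> {bil L y z |z. z \<in> lvecs L} \<Longrightarrow> c dvd b" for c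
    using that assms(2,3) by blast
  show "m dvd b" if b: "b \<in> {bil L y z |z. z \<in> lvecs L}" for b
  proof -
    obtain x where "b = bil L y x"
      using b by blast
    also have "bil L y x = (\<Sum>j<fst L. x j * bil L y (unit_vec j))"
      by (rule bil_expand_right)
    finally have "b = (\<Sum>j<fst L. x j * bil L y (unit_vec j))" .
    then show ?thesis
      using assms(4) by (auto intro!: dvd_sum dvd_mult)
  qed
qed

definition orbit_min_coord0 :: "glat \<Rightarrow> vec \<Rightarrow> vec \<Rightarrow> bool" where
  "orbit_min_coord0 L r x \<longleftrightarrow> in_orbit L r x \<and> x 0 \<noteq> 0 \<and>
     (\<forall>y. in_orbit L r y \<longrightarrow> y 0 \<noteq> 0 \<longrightarrow> \<bar>x 0\<bar> \<le> \<bar>y 0\<bar>)"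

lemma orbit_min_coord0_exists:
  assumes "in_orbit L r x" "x 0 \<noteq> 0"
  obtains y where "orbit_min_coord0 L r y"
proof -
  obtain y where "in_orbit L r y \<and> y 0 \<noteq> 0"
    and "\<forall>z. in_orbit L r z \<and> z 0 \<noteq> 0 \<longrightarrow> nat \<bar>y 0\<bar> \<le> nat \<bar>z 0\<bar>"
    using ex_has_least_nat[of "\<lambda>y. in_orbit L r y \<and> y 0 \<noteq> 0" x "\<lambda>y. nat \<bar>y 0\<bar>"] assms
    by blast
  then have "orbit_min_coord0 L r y"
    unfolding orbit_min_coord0_def by auto
  then show ?thesis
    using that by blast
qed

definition eichler :: "glat \<Rightarrow> vec \<Rightarrow> vec \<Rightarrow> vec \<Rightarrow> vec" where
  "eichler L e a x =
     x - vscale (bil L a x) e + vscale (bil L e x) a - vscale (bil L a a div 2 * bil L e x) e"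

lemma eichler_apply:
  "eichler L e a x k = x k - bil L a x * e k + bil L e x * a k - bil L a a div 2 * bil L e x * e k"
  by (simp add: eichler_def)

lemma isometry_eichler:
  assumes sym: "sym_gram L" and lv: "e \<in> lvecs L" "a \<in> lvecs L"
    and ee: "bil L e e = 0" and ea: "bil L e a = 0" and even: "even (bil L a a)"
  shows "isometry L (eichler L e a) (eichler L e (- a))"
proof -
  define q where "q = bil L a a div 2"
  have comm: "bil L x y = bil L y x" for x y
    using sym by (rule bil_commute)
  have eich: "eichler L e b x = x - vscale (bil L b x) e + vscale (bil L e x) b - vscale (q * bil L e x) e"
    if "bil L b b = 2 * q" for b x
    using that by (simp add: eichler_def)
  have linear: "int_linear (eichler L e b)" if "bil L b b = 2 * q" for b
    unfolding int_linear_def eich[OF that] by (simp add: bil_linear fun_eq_iff algebra_simps)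
  have preserves: "bil L (eichler L e b x) (eichler L e b y) = bil L x y"
    if "bil L e b = 0" "bil L b b = 2 * q" for b x y
  proof -
    have "bil L b e = 0" "bil L x e = bil L e x" "bil L x b = bil L b x"
      "bil L y e = bil L e y" "bil L y b = bil L b y"
      using that comm by metis+
    then show ?thesis
      unfolding eich[OF that(2)] using that ee by (simp add: bil_linear algebra_simps)
  qed
  have inverse: "eichler L e (- b) (eichler L e b x) = x"
    if "bil L e b = 0" "bil L b b = 2 * q" for b x
  proof -
    have b: "bil L b e = 0" "bil L (- b) (- b) = 2 * q"
      using that comm by (metis, simp add: bil_linear)
    have "bil L e (eichler L e b x) = bil L e x"
      unfolding eich[OF that(2)] by (simp add: bil_linear ee that)
    moreover have "bil L b (eichler L e b x) = bil L b x + 2 * q * bil L e x"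
      unfolding eich[OF that(2)] by (simp add: bil_linear ee that b)
    ultimately show ?thesis
      unfolding eich[OF b(2)] by (simp add: bil_linear fun_eq_iff algebra_simps eich[OF that(2)])
  qed
  have "bil L a a = 2 * q" "bil L (- a) (- a) = 2 * q" "bil L e (- a) = 0"
    using even ea by (simp_all add: q_def bil_linear)
  moreover have "eichler L e b x \<in> lvecs L" if "x \<in> lvecs L" "b \<in> lvecs L" for b x
    using that lv by (simp add: eichler_def lvecs_def)
  ultimately show ?thesis
    unfolding isometry_def using linear preserves inverse[of a] inverse[of "- a"] ea lv lvecs_uminus
    by (metis minus_minus)
qed

fun bform :: "int \<Rightarrow> int \<Rightarrow> int \<Rightarrow> int \<times> int \<Rightarrow> int \<times> int \<Rightarrow> int" where
  "bform a b c (p, r) (q, s) = a * p * q + b * (p * s + r * q) + c * r * s"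

definition normal_basis :: "int \<Rightarrow> int \<Rightarrow> int \<Rightarrow> int \<times> int \<Rightarrow> int \<times> int \<Rightarrow> bool" where
  "normal_basis a b c u v \<longleftrightarrow> (fst u * snd v - fst v * snd u)\<^sup>2 = 1 \<and>
     (bform a b c u u, bform a b c u v, bform a b c v v) =
       (if even a \<and> even c then (0, 1, 0) else (1, 0, -1))"

lemma normal_basis_zero_corner:
  assumes "b\<^sup>2 = 1"
  shows "\<exists>u v. normal_basis 0 b c u v"
proof -
  have bb: "b * b = 1" "b * (b * x) = x" for x
    using assms by (simp_all add: power2_eq_square mult.assoc[symmetric])
  show ?thesis
  proof (cases "even c")
    case True
    then obtain k where "c = 2 * k"
      by blast
    then have "normal_basis 0 b c (1, 0) (- k, b)"
      using bb by (simp add: normal_basis_def algebra_simps power2_eq_square)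
    then show ?thesis
      by blast
  next
    case False
    then have "even (1 - c)"
      by simp
    then obtain k where "1 - c = 2 * k"
      by (rule evenE)
    then have k: "c = 1 - 2 * k"
      by simp
    have "normal_basis 0 b c (k * b, 1) (1 - k * b * b, - b)"
      unfolding k by (simp add: normal_basis_def algebra_simps power2_eq_square bb)
    then show ?thesis
      by blast
  qed
qed

lemma bform_shear:
  "bform a b c (p * t + r, p) (q * t + s, q) = bform (c + 2 * t * b + t\<^sup>2 * a) (b + t * a) a (p, r) (q, s)"
  by (simp add: algebra_simps power2_eq_square)

lemma abs_corner_less:
  fixes a b c :: int
  assumes "a * c - b\<^sup>2 = -1" "\<bar>b\<bar> < \<bar>a\<bar>" "2 \<le> \<bar>a\<bar>"
  shows "\<bar>c\<bar> < \<bar>a\<bar>"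
proof -
  have "b\<^sup>2 < a\<^sup>2"
    using assms(2) by (metis abs_ge_zero power2_abs power_strict_mono zero_less_numeral)
  moreover have "4 \<le> a\<^sup>2"
    using assms(3) mult_mono[of 2 "\<bar>a\<bar>" 2 "\<bar>a\<bar>"] by (simp add: power2_eq_square abs_mult_self_eq)
  moreover have "0 \<le> b\<^sup>2"
    by simp
  ultimately have "- a\<^sup>2 < a * c \<and> a * c < a\<^sup>2"
    using assms(1) by linarith
  then have "\<bar>a\<bar> * \<bar>c\<bar> < \<bar>a\<bar> * \<bar>a\<bar>"
    by (simp add: abs_mult[symmetric] abs_less_iff power2_eq_square abs_mult_self_eq)
  then show ?thesis
    using assms(3) by (subst (asm) mult_less_cancel_left_pos) auto
qed

lemma normal_basis_exists:
  fixes a b c :: int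
  assumes "a * c - b\<^sup>2 = -1"
  shows "\<exists>u v. normal_basis a b c u v"
  using assms
proof (induction "nat \<bar>a\<bar>" arbitrary: a b c rule: less_induct)
  case less
  consider "a = 0" | "a = 1" | "a = -1" | "\<bar>a\<bar> \<ge> 2"
    by linarith
  then show ?case
  proof cases
    case 1
    then show ?thesis
      using less.prems normal_basis_zero_corner by simp
  next
    case 2
    then have "normal_basis a b c (1, 0) (- b, 1)"
      using less.prems by (simp add: normal_basis_def power2_eq_square algebra_simps)
    then show ?thesis
      by blast
  next
    case 3
    then have "normal_basis a b c (b, 1) (1, 0)"
      using less.prems by (simp add: normal_basis_def power2_eq_square algebra_simps)
    then show ?thesis
      by blast
  next
    case 4
    text \<open>Reduce b modulo a by a shear; the form with the roles of a and c swapped has a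
      smaller corner entry.\<close>
    define t where "t = - (b div a)"
    define b' where "b' = b + t * a"
    define c' where "c' = c + 2 * t * b + t\<^sup>2 * a"
    have "b' = b mod a"
      by (simp add: b'_def t_def minus_div_mult_eq_mod[symmetric])
    then have b': "\<bar>b'\<bar> < \<bar>a\<bar>"
      using 4 by (simp add: abs_mod_less)
    have det: "c' * a - b'\<^sup>2 = -1"
      using less.prems by (simp add: b'_def c'_def algebra_simps power2_eq_square)
    then have "\<bar>c'\<bar> < \<bar>a\<bar>"
      using abs_corner_less[of a c' b'] det b' 4 by (simp add: algebra_simps)
    then have "nat \<bar>c'\<bar> < nat \<bar>a\<bar>"
      by simp
    then obtain u v where uv: "normal_basis c' b' a u v"
      using less.hyps det by blast
    obtain p r q s where "u = (p, r)" "v = (q, s)"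
      by fastforce
    moreover have "(even a \<and> even c) = (even c' \<and> even a)"
      by (cases "even a") (auto simp: c'_def power2_eq_square)
    ultimately have "normal_basis a b c (p * t + r, p) (q * t + s, q)"
      using uv unfolding normal_basis_def bform_shear b'_def c'_def
      by (simp add: power2_eq_square algebra_simps)
    then show ?thesis
      by blast
  qed
qed

definition gram_L2d :: "int \<Rightarrow> nat \<Rightarrow> nat \<Rightarrow> int" where
  "gram_L2d d i j =
     (if i < 2 \<and> j < 2 \<or> 2 \<le> i \<and> i < 4 \<and> 2 \<le> j \<and> j < 4 then (if i = j then 0 else 1)
      else if 4 \<le> i \<and> i < 12 \<and> 4 \<le> j \<and> j < 12 then snd E8neg (i - 4) (j - 4)
      else if 12 \<le> i \<and> i < 20 \<and> 12 \<le> j \<and> j < 20 then snd E8neg (i - 12) (j - 12)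
      else if i = 20 \<and> j = 20 then -2 * d else 0)"

lemma fst_L2d: "fst (L2d d) = 21"
  by (simp add: L2d_def osum_simps)

lemma snd_L2d: "snd (L2d d) i j = gram_L2d d i j"
proof -
  have "i < 2 \<or> 2 \<le> i \<and> i < 4 \<or> 4 \<le> i \<and> i < 12 \<or> 12 \<le> i \<and> i < 20 \<or> i = 20 \<or> 21 \<le> i"
    "j < 2 \<or> 2 \<le> j \<and> j < 4 \<or> 4 \<le> j \<and> j < 12 \<or> 12 \<le> j \<and> j < 20 \<or> j = 20 \<or> 21 \<le> j"
    by arith+
  then show ?thesis
    unfolding L2d_def
    by (elim disjE conjE) (auto simp: osum_simps gram_L2d_def snd_Hyp snd_rk1)
qed

lemma sym_gram_E8neg: "sym_gram E8neg"
proof -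
  have "e8_adj i j = e8_adj j i" for i j
    unfolding e8_adj_def by arith
  then show ?thesis
    unfolding sym_gram_def E8neg_def by auto
qed

lemma sym_gram_L2d: "sym_gram (L2d d)"
  using sym_gram_E8neg unfolding sym_gram_def snd_L2d gram_L2d_def by auto

lemma even_diag_L2d: "even (snd (L2d d) i i)"
  by (simp add: snd_L2d gram_L2d_def E8neg_def)

lemma even_bil_L2d: "even (bil (L2d d) x x)"
  using sym_gram_L2d even_diag_L2d by (rule bil_self_even)

lemma bil_commute_L2d: "bil (L2d d) x y = bil (L2d d) y x"
  using sym_gram_L2d by (rule bil_commute)

lemma lvecs_unit_vec_L2d: "i < 21 \<Longrightarrow> unit_vec i \<in> lvecs (L2d d)"
  by (simp add: lvecs_unit_vec fst_L2d)

lemma bil_unit_vec_L2d: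
  assumes "k < 21" "\<And>i. i < 21 \<Longrightarrow> gram_L2d d i k = (if i = p then c else 0)" "p < 21"
  shows "bil (L2d d) x (unit_vec k) = c * x p"
proof -
  have "bil (L2d d) x (unit_vec k) = (\<Sum>i<21. x i * (if i = p then c else 0))"
    using assms(1,2) by (simp add: bil_unit_vec_right fst_L2d snd_L2d)
  also have "\<dots> = (\<Sum>i\<in>{p}. x i * c)"
    using assms(3) by (intro sum.mono_neutral_cong_right) auto
  finally show ?thesis
    by simp
qed

lemma bil_unit_vec_0: "bil (L2d d) x (unit_vec 0) = x 1"
  using bil_unit_vec_L2d[of 0 d 1 1 x] by (simp add: gram_L2d_def)

lemma bil_unit_vec_1: "bil (L2d d) x (unit_vec 1) = x 0"
  using bil_unit_vec_L2d[of 1 d 0 1 x] by (simp add: gram_L2d_def)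

lemma bil_unit_vec_2: "bil (L2d d) x (unit_vec 2) = x 3"
  using bil_unit_vec_L2d[of 2 d 3 1 x] by (simp add: gram_L2d_def)

lemma bil_unit_vec_3: "bil (L2d d) x (unit_vec 3) = x 2"
  using bil_unit_vec_L2d[of 3 d 2 1 x] by (simp add: gram_L2d_def)

lemma bil_unit_vec_20: "bil (L2d d) x (unit_vec 20) = -2 * d * x 20"
  using bil_unit_vec_L2d[of 20 d 20 "-2 * d" x] by (simp add: gram_L2d_def)

lemmas bil_unit_vec_coords =
  bil_unit_vec_0 bil_unit_vec_1 bil_unit_vec_2 bil_unit_vec_3 bil_unit_vec_20
  bil_unit_vec_0[THEN trans[OF bil_commute_L2d]] bil_unit_vec_1[THEN trans[OF bil_commute_L2d]]
  bil_unit_vec_2[THEN trans[OF bil_commute_L2d]] bil_unit_vec_3[THEN trans[OF bil_commute_L2d]]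
  bil_unit_vec_20[THEN trans[OF bil_commute_L2d]]
  bil_unit_vec_1[simplified] bil_unit_vec_1[THEN trans[OF bil_commute_L2d], simplified]

lemma gram_L2d_E8_column:
  assumes "a = 4 \<or> a = 12" "a \<le> k" "k < a + 8"
  shows "gram_L2d d i k = (if a \<le> i \<and> i < a + 8 then snd E8neg (i - a) (k - a) else 0)"
  using assms unfolding gram_L2d_def by (elim disjE) simp_all

lemma bil_unit_vec_E8_block:
  assumes "a = 4 \<or> a = 12" "a \<le> k" "k < a + 8"
  shows "bil (L2d d) x (unit_vec k) = (\<Sum>i<8. x (i + a) * snd E8neg i (k - a))"
proof -
  have "bil (L2d d) x (unit_vec k) = (\<Sum>i<21. x i * gram_L2d d i k)"
    using assms by (auto simp: bil_unit_vec_right fst_L2d snd_L2d)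
  also have "\<dots> = (\<Sum>i\<in>{a..<a + 8}. x i * snd E8neg (i - a) (k - a))"
    using assms by (intro sum.mono_neutral_cong_right) (auto simp: gram_L2d_E8_column)
  also have "\<dots> = (\<Sum>i<8. x (i + a) * snd E8neg i (k - a))"
    using sum.shift_bounds_nat_ivl[of "\<lambda>i. x i * snd E8neg (i - a) (k - a)" 0 a 8]
    by (simp add: add.commute atLeast0LessThan)
  finally show ?thesis .
qed

lemma E8neg_dvd_coords:
  fixes z :: vec
  assumes "\<And>k. k < 8 \<Longrightarrow> m dvd (\<Sum>i<8. z i * snd E8neg i k)" and "i < 8"
  shows "m dvd z i"
proof -
  have col: "(\<Sum>i<8. z i * snd E8neg i k) = z 0 * snd E8neg 0 k + z 1 * snd E8neg 1 k
      + z 2 * snd E8neg 2 k + z 3 * snd E8neg 3 k + z 4 * snd E8neg 4 k + z 5 * snd E8neg 5 k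
      + z 6 * snd E8neg 6 k + z 7 * snd E8neg 7 k" for k
    by (simp add: eval_nat_numeral)
  have lin: "m dvd c0 * q0 + c1 * q1 + c2 * q2 + c3 * q3 + c4 * q4 + c5 * q5 + c6 * q6 + c7 * q7"
    if "m dvd q0" "m dvd q1" "m dvd q2" "m dvd q3" "m dvd q4" "m dvd q5" "m dvd q6" "m dvd q7"
    for c0 c1 c2 c3 c4 c5 c6 c7 q0 q1 q2 q3 q4 q5 q6 q7 :: int
    by (intro dvd_add dvd_mult that)
  have "m dvd -2 * z 0 + z 1" "m dvd z 0 - 2 * z 1 + z 2" "m dvd z 1 - 2 * z 2 + z 3"
    "m dvd z 2 - 2 * z 3 + z 4" "m dvd z 3 - 2 * z 4 + z 5 + z 7" "m dvd z 4 - 2 * z 5 + z 6"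
    "m dvd z 5 - 2 * z 6" "m dvd z 4 - 2 * z 7"
    using assms(1)[of 0] assms(1)[of 1] assms(1)[of 2] assms(1)[of 3] assms(1)[of 4]
      assms(1)[of 5] assms(1)[of 6] assms(1)[of 7]
    unfolding col by (simp_all add: E8neg_def e8_adj_def algebra_simps)
  note combination = lin[OF this]
  text \<open>The coefficients are the rows of the inverse of the E8 Cartan matrix.\<close>
  from \<open>i < 8\<close> consider "i = 0" | "i = 1" | "i = 2" | "i = 3" | "i = 4" | "i = 5" | "i = 6" | "i = 7"
    by linarith
  then show ?thesis
  proof cases
    case 1 show ?thesis using combination[of "-2" "-3" "-4" "-5" "-6" "-4" "-2" "-3"] 1 by (simp add: algebra_simps)
  next
    case 2 show ?thesis using combination[of "-3" "-6" "-8" "-10" "-12" "-8" "-4" "-6"] 2 by (simp add: algebra_simps)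
  next
    case 3 show ?thesis using combination[of "-4" "-8" "-12" "-15" "-18" "-12" "-6" "-9"] 3 by (simp add: algebra_simps)
  next
    case 4 show ?thesis using combination[of "-5" "-10" "-15" "-20" "-24" "-16" "-8" "-12"] 4 by (simp add: algebra_simps)
  next
    case 5 show ?thesis using combination[of "-6" "-12" "-18" "-24" "-30" "-20" "-10" "-15"] 5 by (simp add: algebra_simps)
  next
    case 6 show ?thesis using combination[of "-4" "-8" "-12" "-16" "-20" "-14" "-7" "-10"] 6 by (simp add: algebra_simps)
  next
    case 7 show ?thesis using combination[of "-2" "-4" "-6" "-8" "-10" "-7" "-4" "-5"] 7 by (simp add: algebra_simps)
  next
    case 8 show ?thesis using combination[of "-3" "-6" "-9" "-12" "-15" "-10" "-5" "-8"] 8 by (simp add: algebra_simps)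
  qed
qed

lemma isometry_transpose_L2d:
  assumes "(a, b) = (0, 1) \<or> (a, b) = (2, 3)"
  shows "isometry (L2d d) (\<lambda>x. x \<circ> transpose a b) (\<lambda>x. x \<circ> transpose a b)"
proof -
  have "snd (L2d d) (transpose a b i) (transpose a b j) = snd (L2d d) i j" for i j
  proof -
    have "i = a \<or> i = b \<or> i \<notin> {a, b}" "j = a \<or> j = b \<or> j \<notin> {a, b}"
      by auto
    then show ?thesis
      using assms by (elim disjE) (auto simp: snd_L2d gram_L2d_def)
  qed
  then show ?thesis
    using isometry_permute_coords[of "transpose a b" "L2d d"] assms
    by (auto simp: fst_L2d permutes_swap_id)
qed

lemma in_orbit_eichler_L2d:
  assumes "in_orbit (L2d d) r y" "e \<in> lvecs (L2d d)" "a \<in> lvecs (L2d d)"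
    "bil (L2d d) e e = 0" "bil (L2d d) e a = 0"
  shows "in_orbit (L2d d) r (eichler (L2d d) e a y)"
  using assms(1) isometry_eichler[OF sym_gram_L2d assms(2-5) even_bil_L2d] by (rule in_orbit_step)

lemma in_orbit_eichler_hyperbolic:
  assumes "in_orbit (L2d d) r y" "(i, j) \<in> {(3, 0), (1, 2), (0, 2)}"
  shows "in_orbit (L2d d) r (eichler (L2d d) (unit_vec i) (vscale t (unit_vec j)) y)"
  using assms by (intro in_orbit_eichler_L2d)
    (auto simp: lvecs_unit_vec_L2d lvecs_vscale bil_linear bil_unit_vec_coords unit_vec_apply)

lemmas L2d_coord_simps = eichler_apply bil_linear bil_unit_vec_coords unit_vec_apply

lemma orbit_min_coord0_le_coord2:
  assumes min: "orbit_min_coord0 (L2d d) r x" and y: "in_orbit (L2d d) r y" "y 2 \<noteq> 0"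
  shows "\<bar>x 0\<bar> \<le> \<bar>y 2\<bar>"
proof -
  define t where "t = (if y 0 mod y 2 = 0 then 1 else 0) - y 0 div y 2"
  define c where "c = (if y 0 mod y 2 = 0 then y 2 else 0)"
  define z where "z = eichler (L2d d) (unit_vec 3) (vscale t (unit_vec 0)) y"
  have "in_orbit (L2d d) r z"
    unfolding z_def using y(1) by (rule in_orbit_eichler_hyperbolic) simp
  moreover have "z 0 = (y 0 - y 0 div y 2 * y 2) + c"
    by (simp add: z_def L2d_coord_simps t_def c_def algebra_simps)
  then have "z 0 = y 0 mod y 2 + c"
    by (simp add: minus_div_mult_eq_mod)
  moreover have "y 0 mod y 2 + c \<noteq> 0" "\<bar>y 0 mod y 2 + c\<bar> \<le> \<bar>y 2\<bar>"
    using abs_mod_less[OF y(2), of "y 0"] y(2) by (auto simp: c_def)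
  ultimately show ?thesis
    using min unfolding orbit_min_coord0_def by force
qed

lemma in_orbit_coord2_mod_coord0:
  assumes "in_orbit (L2d d) r x"
  obtains z where "in_orbit (L2d d) r z" "z 0 = x 0" "z 2 = x 2 mod x 0" "z 3 = x 3"
proof
  define z where "z = eichler (L2d d) (unit_vec 1) (vscale (- (x 2 div x 0)) (unit_vec 2)) x"
  show "in_orbit (L2d d) r z"
    unfolding z_def using assms by (rule in_orbit_eichler_hyperbolic) simp
  show "z 0 = x 0" "z 3 = x 3"
    by (simp_all add: z_def L2d_coord_simps)
  have "z 2 = x 2 - x 2 div x 0 * x 0"
    by (simp add: z_def L2d_coord_simps)
  then show "z 2 = x 2 mod x 0"
    by (simp add: minus_div_mult_eq_mod)
qed

lemma orbit_min_coord0_dvd_coord2: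
  assumes min: "orbit_min_coord0 (L2d d) r x"
  shows "x 0 dvd x 2"
proof (rule ccontr)
  assume "\<not> x 0 dvd x 2"
  then have "x 2 mod x 0 \<noteq> 0"
    by (simp add: dvd_eq_mod_eq_0)
  moreover obtain z where "in_orbit (L2d d) r z" "z 2 = x 2 mod x 0"
    using min in_orbit_coord2_mod_coord0 unfolding orbit_min_coord0_def by metis
  ultimately have "\<bar>x 0\<bar> \<le> \<bar>x 2 mod x 0\<bar>"
    using orbit_min_coord0_le_coord2[OF min] by metis
  moreover have "\<bar>x 2 mod x 0\<bar> < \<bar>x 0\<bar>"
    using min by (intro abs_mod_less) (simp add: orbit_min_coord0_def)
  ultimately show False
    by simp
qed

lemma orbit_min_coord0_clear_coord2:
  assumes min: "orbit_min_coord0 (L2d d) r x"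
  obtains z where "orbit_min_coord0 (L2d d) r z" "z 0 = x 0" "z 2 = 0" "z 3 = x 3"
proof -
  obtain z where "in_orbit (L2d d) r z" "z 0 = x 0" "z 2 = x 2 mod x 0" "z 3 = x 3"
    using min in_orbit_coord2_mod_coord0 unfolding orbit_min_coord0_def by metis
  moreover have "x 2 mod x 0 = 0"
    using orbit_min_coord0_dvd_coord2[OF min] by simp
  ultimately show ?thesis
    using min that unfolding orbit_min_coord0_def by auto
qed

text \<open>The transposition of the coordinates 2 and 3 lets the same reduction clear coordinate 3.\<close>
lemma orbit_min_coord0_clear_coords23:
  assumes "orbit_min_coord0 (L2d d) r x"
  obtains y where "orbit_min_coord0 (L2d d) r y" "y 2 = 0" "y 3 = 0"
proof -
  obtain z where z: "orbit_min_coord0 (L2d d) r z" "z 2 = 0"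
    using orbit_min_coord0_clear_coord2[OF assms] by blast
  define w where "w = z \<circ> transpose 2 3"
  have "in_orbit (L2d d) r w"
    unfolding w_def using z(1) isometry_transpose_L2d[of 2 3 d]
    by (auto simp: orbit_min_coord0_def intro: in_orbit_step)
  then have "orbit_min_coord0 (L2d d) r w" "w 3 = 0"
    using z by (simp_all add: w_def orbit_min_coord0_def)
  then show ?thesis
    using orbit_min_coord0_clear_coord2 that by metis
qed

lemma in_orbit_coord2_sub_bil_unit_vec:
  assumes "in_orbit (L2d d) r y" "4 \<le> k" "k < 21" "y 3 = 0"
  obtains z where "in_orbit (L2d d) r z" "z 0 = y 0" "z 2 = y 2 - bil (L2d d) y (unit_vec k)"
proof
  define z where "z = eichler (L2d d) (unit_vec 2) (unit_vec k) y"
  show "in_orbit (L2d d) r z"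
    unfolding z_def using assms(1)
  proof (rule in_orbit_eichler_L2d)
    show "unit_vec 2 \<in> lvecs (L2d d)" "unit_vec k \<in> lvecs (L2d d)"
      using assms(3) by (simp_all add: lvecs_unit_vec_L2d)
    show "bil (L2d d) (unit_vec 2) (unit_vec 2) = 0" "bil (L2d d) (unit_vec 2) (unit_vec k) = 0"
      using assms(2) by (simp_all add: bil_unit_vec_coords unit_vec_apply)
  qed
  have "z 2 = y 2 - bil (L2d d) (unit_vec k) y"
    using assms(2,4) by (simp add: z_def eichler_apply bil_unit_vec_coords unit_vec_apply)
  then show "z 2 = y 2 - bil (L2d d) y (unit_vec k)"
    by (simp add: bil_commute_L2d[of d "unit_vec k"])
  show "z 0 = y 0"
    using assms(2) by (simp add: z_def eichler_apply bil_unit_vec_coords unit_vec_apply)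
qed

lemma in_orbit_coord0_nonzero_of_coord2:
  assumes "in_orbit (L2d d) r y" "y 0 \<noteq> 0 \<or> y 2 \<noteq> 0"
  obtains x where "in_orbit (L2d d) r x" "x 0 \<noteq> 0"
proof (cases "y 0 = 0")
  case True
  let ?z = "eichler (L2d d) (unit_vec 3) (vscale 1 (unit_vec 0)) y"
  have "in_orbit (L2d d) r ?z"
    using assms(1) by (rule in_orbit_eichler_hyperbolic) simp
  moreover have "?z 0 = y 2"
    using True by (simp add: L2d_coord_simps)
  ultimately show ?thesis
    using that assms(2) True by auto
qed (use assms that in auto)

lemma in_orbit_coord0_nonzero:
  assumes "bil (L2d d) r r \<noteq> 0"
  obtains x where "in_orbit (L2d d) r x" "x 0 \<noteq> 0"
proof -
  have swap: "in_orbit (L2d d) r (r \<circ> transpose a b)" if "(a, b) = (0, 1) \<or> (a, b) = (2, 3)" for a b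
    using in_orbit_step[OF in_orbit_refl isometry_transpose_L2d[OF that]] .
  consider "r 0 \<noteq> 0 \<or> r 2 \<noteq> 0" | "r 1 \<noteq> 0" | "r 3 \<noteq> 0" | "r 0 = 0" "r 1 = 0" "r 2 = 0" "r 3 = 0"
    by blast
  then show ?thesis
  proof cases
    case 1
    then show ?thesis
      using in_orbit_coord0_nonzero_of_coord2[OF in_orbit_refl] that by blast
  next
    case 2
    then show ?thesis
      using swap[of 0 1] that by simp
  next
    case 3
    then have "(r \<circ> transpose 2 3) 2 \<noteq> 0"
      by simp
    then show ?thesis
      using in_orbit_coord0_nonzero_of_coord2[OF swap[of 2 3]] that by blast
  next
    case 4
    obtain k where k: "k < 21" "r k \<noteq> 0" "bil (L2d d) r (unit_vec k) \<noteq> 0"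
      using bil_self_nonzero_coord[OF assms] by (auto simp: fst_L2d)
    then have "4 \<le> k"
      using 4 by (cases "k < 4") (auto simp: less_Suc_eq numeral_eq_Suc)
    then obtain z where z: "in_orbit (L2d d) r z" "z 2 = r 2 - bil (L2d d) r (unit_vec k)"
      by (rule in_orbit_coord2_sub_bil_unit_vec[OF in_orbit_refl[of "L2d d" r] _ k(1) \<open>r 3 = 0\<close>])
    then have "z 2 \<noteq> 0"
      using k(3) 4 by simp
    then show ?thesis
      using in_orbit_coord0_nonzero_of_coord2[OF z(1)] that by blast
  qed
qed

lemma orbit_min_coord0_dvd_bil_unit_vec:
  assumes min: "orbit_min_coord0 (L2d d) r x" and x23: "x 2 = 0" "x 3 = 0" and "k < 21"
  shows "x 0 dvd bil (L2d d) x (unit_vec k)"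
proof -
  have dvd: "x 0 dvd z 2" if "in_orbit (L2d d) r z" "z 0 = x 0" for z
    using orbit_min_coord0_dvd_coord2[of d r z] min that unfolding orbit_min_coord0_def by simp
  consider "k = 0" | "k = 1" | "k = 2" | "k = 3" | "4 \<le> k"
    by arith
  then show ?thesis
  proof cases
    case 1
    let ?z = "eichler (L2d d) (unit_vec 0) (vscale 1 (unit_vec 2)) x"
    have "in_orbit (L2d d) r ?z"
      using min unfolding orbit_min_coord0_def by (intro in_orbit_eichler_hyperbolic) auto
    moreover have "?z 0 = x 0" "?z 2 = x 1"
      using x23 by (simp_all add: L2d_coord_simps)
    ultimately have "x 0 dvd x 1"
      using dvd by metis
    then show ?thesis
      using 1 by (simp add: bil_unit_vec_coords)
  next
    case 5
    have "in_orbit (L2d d) r x"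
      using min by (simp add: orbit_min_coord0_def)
    then obtain z where "in_orbit (L2d d) r z" "z 0 = x 0" "z 2 = - bil (L2d d) x (unit_vec k)"
      using in_orbit_coord2_sub_bil_unit_vec[of d r x k] 5 \<open>k < 21\<close> x23 by auto
    then show ?thesis
      using dvd by (metis dvd_minus_iff)
  qed (use x23 in \<open>simp_all add: bil_unit_vec_coords\<close>)
qed

lemma in_orbit_coord0_eq_ldiv:
  assumes "r \<in> lvecs (L2d d)" "bil (L2d d) r r \<noteq> 0"
  obtains y where "in_orbit (L2d d) r y" "y 0 = ldiv (L2d d) r" "y 0 > 0" "y 2 = 0" "y 3 = 0"
    "\<And>k. k < 21 \<Longrightarrow> y 0 dvd bil (L2d d) y (unit_vec k)"
proof -
  obtain x where "orbit_min_coord0 (L2d d) r x" "x 2 = 0" "x 3 = 0"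
    using in_orbit_coord0_nonzero[OF assms(2)] orbit_min_coord0_exists orbit_min_coord0_clear_coords23
    by metis
  then have x: "in_orbit (L2d d) r x" "x 0 \<noteq> 0" "x 2 = 0" "x 3 = 0"
    and dvd: "\<And>k. k < 21 \<Longrightarrow> x 0 dvd bil (L2d d) x (unit_vec k)"
    using orbit_min_coord0_dvd_bil_unit_vec by (auto simp: orbit_min_coord0_def)
  obtain y where y: "in_orbit (L2d d) r y" "y 0 = \<bar>x 0\<bar>" "y 2 = 0" "y 3 = 0"
    "\<And>k. k < 21 \<Longrightarrow> y 0 dvd bil (L2d d) y (unit_vec k)"
  proof (cases "x 0 > 0")
    case False
    show ?thesis
    proof (rule that[of "- x"])
      show "in_orbit (L2d d) r (- x)"
        using x(1) isometry_uminus by (rule in_orbit_step)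
    qed (use False x dvd in \<open>simp_all add: bil_linear\<close>)
  qed (use x dvd that in auto)
  have "ldiv (L2d d) y = y 0"
  proof (rule ldiv_eqI)
    show "unit_vec 1 \<in> lvecs (L2d d)" "bil (L2d d) y (unit_vec 1) = y 0"
      by (simp_all add: lvecs_unit_vec_L2d bil_unit_vec_coords)
  qed (use y in \<open>simp_all add: fst_L2d\<close>)
  moreover have "ldiv (L2d d) y = ldiv (L2d d) r"
    using y(1) assms(1) by (rule in_orbit_ldiv)
  ultimately show ?thesis
    using that y x(2) by simp
qed

definition vec_0_1_20 :: "int \<Rightarrow> int \<Rightarrow> int \<Rightarrow> vec" where
  "vec_0_1_20 m h b = (\<lambda>k. if k = 0 then m else if k = 1 then h else if k = 20 then b else 0)"

lemma lvecs_vec_0_1_20: "vec_0_1_20 m h b \<in> lvecs (L2d d)"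
  by (simp add: vec_0_1_20_def lvecs_def fst_L2d)

lemma bil_vec_0_1_20:
  "bil (L2d d) (vec_0_1_20 m h b) x = m * x 1 + h * x 0 - 2 * d * b * x 20"
proof -
  have "bil (L2d d) x (vec_0_1_20 m h b) = (\<Sum>j<21. vec_0_1_20 m h b j * bil (L2d d) x (unit_vec j))"
    using bil_expand_right[of "L2d d" x "vec_0_1_20 m h b"] by (simp only: fst_L2d)
  also have "\<dots> = (\<Sum>j\<in>{0, 1, 20}. vec_0_1_20 m h b j * bil (L2d d) x (unit_vec j))"
    by (rule sum.mono_neutral_right) (auto simp: vec_0_1_20_def)
  also have "\<dots> = m * x 1 + h * x 0 - 2 * d * b * x 20"
    by (simp add: vec_0_1_20_def bil_unit_vec_coords)
  finally show ?thesis
    by (simp add: bil_commute_L2d)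
qed

lemma dvd_E8_coords:
  assumes "\<And>k. 4 \<le> k \<Longrightarrow> k < 20 \<Longrightarrow> m dvd bil (L2d d) y (unit_vec k)" "4 \<le> i" "i < 20"
  shows "m dvd y i"
proof -
  define a :: nat where "a = (if i < 12 then 4 else 12)"
  have a: "a = 4 \<or> a = 12" "a \<le> i" "i < a + 8"
    using assms(2,3) by (auto simp: a_def)
  have "m dvd (\<Sum>j<8. y (j + a) * snd E8neg j k)" if "k < 8" for k
    using assms(1)[of "k + a"] bil_unit_vec_E8_block[of a "k + a" d y] a(1) that by auto
  then have "m dvd y (i - a + a)"
    using E8neg_dvd_coords[of m "\<lambda>j. y (j + a)" "i - a"] a by simp
  then show ?thesis
    using a(2) by simp
qed

lemma in_orbit_clear_E8_coords:
  assumes y: "in_orbit (L2d d) r y" "y \<in> lvecs (L2d d)" "y 0 = m" "y 2 = 0" "y 3 = 0"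
    and E8: "\<And>j. 4 \<le> j \<Longrightarrow> j < 20 \<Longrightarrow> m dvd y j"
  obtains h where "in_orbit (L2d d) r (vec_0_1_20 m h (y 20))"
proof -
  define a where "a j = (if 4 \<le> j \<and> j < 20 then - (y j div m) else 0)" for j
  define z where "z = eichler (L2d d) (unit_vec 1) a y"
  have "in_orbit (L2d d) r z"
    unfolding z_def using y(1)
  proof (rule in_orbit_eichler_L2d)
    show "unit_vec 1 \<in> lvecs (L2d d)"
      by (rule lvecs_unit_vec_L2d) simp
    show "a \<in> lvecs (L2d d)"
      by (simp add: a_def lvecs_def fst_L2d)
    show "bil (L2d d) (unit_vec 1) (unit_vec 1) = 0" "bil (L2d d) (unit_vec 1) a = 0"
      by (simp_all add: bil_unit_vec_coords unit_vec_apply a_def)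
  qed
  moreover have "z = vec_0_1_20 m (z 1) (y 20)"
  proof
    fix j
    have "z j = y j + m * a j" if "j \<noteq> 1"
      using that y(3) by (simp add: z_def eichler_apply bil_unit_vec_coords unit_vec_apply)
    moreover have "y j = 0" if "j > 20"
      using y(2) that by (simp add: lvecs_def fst_L2d)
    moreover have "j = 2 \<or> j = 3" if "0 < j" "j \<noteq> 1" "j < 4"
      using that by arith
    moreover have "m * (y j div m) = y j" if "4 \<le> j" "j < 20"
      using E8[OF that] by simp
    ultimately show "z j = vec_0_1_20 m (z 1) (y 20) j"
      using y by (auto simp: vec_0_1_20_def a_def)
  qed
  ultimately show ?thesis
    using that by metis
qed

lemma in_orbit_normal_form:
  assumes r: "r \<in> lvecs (L2d d)" "bil (L2d d) r r \<noteq> 0"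
  obtains k b where "in_orbit (L2d d) r (vec_0_1_20 (ldiv (L2d d) r) (ldiv (L2d d) r * k) b)"
    "ldiv (L2d d) r > 0"
proof -
  define m where "m = ldiv (L2d d) r"
  obtain y where y: "in_orbit (L2d d) r y" "y 0 = m" "m > 0" "y 2 = 0" "y 3 = 0"
    and dvd: "\<And>k. k < 21 \<Longrightarrow> m dvd bil (L2d d) y (unit_vec k)"
    using in_orbit_coord0_eq_ldiv[OF r] unfolding m_def by metis
  have "y \<in> lvecs (L2d d)"
    using y(1) r(1) by (rule in_orbit_lvecs)
  moreover have "m dvd y j" if "4 \<le> j" "j < 20" for j
    using dvd_E8_coords[of m d y j] dvd that by simp
  ultimately obtain h where z: "in_orbit (L2d d) r (vec_0_1_20 m h (y 20))"
    using in_orbit_clear_E8_coords[OF y(1) _ y(2,4,5)] by blast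
  have "ldiv (L2d d) (vec_0_1_20 m h (y 20)) dvd bil (L2d d) (vec_0_1_20 m h (y 20)) (unit_vec 0)"
    by (simp add: ldiv_dvd_bil lvecs_unit_vec_L2d)
  moreover have "bil (L2d d) (vec_0_1_20 m h (y 20)) (unit_vec 0) = h"
    by (simp add: bil_unit_vec_0 vec_0_1_20_def)
  moreover have "ldiv (L2d d) (vec_0_1_20 m h (y 20)) = m"
    using in_orbit_ldiv[OF z r(1)] by (simp add: m_def)
  ultimately show ?thesis
    using that z y(3) unfolding m_def by (metis dvd_def)
qed

lemma perp_vec_0_1_20:
  assumes "m \<noteq> 0" "2 * d * b = m * l"
  shows "x \<in> perp (L2d d) (vec_0_1_20 m (m * k) b) \<longleftrightarrow>
    x \<in> lvecs (L2d d) \<and> x 1 = l * x 20 - k * x 0"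
proof -
  have "bil (L2d d) (vec_0_1_20 m (m * k) b) x = m * (x 1 + k * x 0 - l * x 20)"
    using assms(2) by (simp add: bil_vec_0_1_20 algebra_simps)
  then show ?thesis
    using assms(1) by (auto simp: perp_def)
qed

lemma bil_vec_0_1_20_vec_0_1_20:
  "bil (L2d d) (vec_0_1_20 p (l * r - k * p) r) (vec_0_1_20 q (l * s - k * q) s) =
    bform (-2 * k) l (-2 * d) (p, r) (q, s)"
  unfolding bil_vec_0_1_20 by (simp add: vec_0_1_20_def algebra_simps)

lemma bil_vec_0_1_20_unit_vec:
  "2 \<le> j \<Longrightarrow> j < 20 \<Longrightarrow> bil (L2d d) (vec_0_1_20 m h b) (unit_vec j) = 0"
  by (simp add: bil_vec_0_1_20 unit_vec_apply)

lemma snd_Hyp_E8neg_E8neg_osum: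
  assumes "bounded_gram X" "i < 20" "j < 20"
  shows "snd (Hyp \<oplus> E8neg \<oplus> E8neg \<oplus> X) i j =
    (if i < 18 \<and> j < 18 then gram_L2d d (i + 2) (j + 2)
     else if 18 \<le> i \<and> 18 \<le> j then snd X (i - 18) (j - 18) else 0)"
proof -
  have "i < 2 \<or> 2 \<le> i \<and> i < 10 \<or> 10 \<le> i \<and> i < 18 \<or> 18 \<le> i"
    "j < 2 \<or> 2 \<le> j \<and> j < 10 \<or> 10 \<le> j \<and> j < 18 \<or> 18 \<le> j"
    by linarith+
  then show ?thesis
    using assms by (elim disjE conjE) (auto simp: osum_simps snd_Hyp gram_L2d_def)
qed

definition perp_vec :: "int \<Rightarrow> int \<Rightarrow> int \<times> int \<Rightarrow> vec" where
  "perp_vec l k u = vec_0_1_20 (fst u) (l * snd u - k * fst u) (snd u)"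

definition perp_basis :: "int \<Rightarrow> int \<Rightarrow> int \<times> int \<Rightarrow> int \<times> int \<Rightarrow> nat \<Rightarrow> vec" where
  "perp_basis l k u v i =
     (if i < 18 then unit_vec (i + 2) else if i = 18 then perp_vec l k u else perp_vec l k v)"

lemma lin_comb_perp_basis:
  "lin_comb c (perp_basis l k u v) 20 j =
    (if 2 \<le> j \<and> j < 20 then c (j - 2) else 0) + c 18 * perp_vec l k u j + c 19 * perp_vec l k v j"
proof -
  have "lin_comb c (perp_basis l k u v) 20 j =
      (\<Sum>i<18. c i * unit_vec (i + 2) j) + c 18 * perp_vec l k u j + c 19 * perp_vec l k v j"
    by (simp add: lin_comb_def perp_basis_def eval_nat_numeral)
  moreover have "(\<Sum>i<18. c i * unit_vec (i + 2) j) = (if 2 \<le> j \<and> j < 20 then c (j - 2) else 0)"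
  proof (cases "2 \<le> j \<and> j < 20")
    case True
    then have "(\<Sum>i<18. c i * unit_vec (i + 2) j) = (\<Sum>i\<in>{j - 2}. c i)"
      by (intro sum.mono_neutral_cong_right) (auto simp: unit_vec_apply)
    then show ?thesis
      using True by simp
  qed (auto simp: unit_vec_apply intro!: sum.neutral)
  ultimately show ?thesis
    by simp
qed

lemma perp_eq_lin_comb_perp_basis_iff:
  assumes m: "m \<noteq> 0" "2 * d * b = m * l" and x: "x \<in> perp (L2d d) (vec_0_1_20 m (m * k) b)"
  shows "x = lin_comb c (perp_basis l k u v) 20 \<longleftrightarrow> (\<forall>i<18. c i = x (i + 2)) \<and>
    x 0 = fst u * c 18 + fst v * c 19 \<and> x 20 = snd u * c 18 + snd v * c 19"
proof
  assume "x = lin_comb c (perp_basis l k u v) 20"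
  then have "x j = lin_comb c (perp_basis l k u v) 20 j" for j
    by simp
  from this[of 0] this[of 20] this[of "i + 2" for i] show "(\<forall>i<18. c i = x (i + 2)) \<and>
    x 0 = fst u * c 18 + fst v * c 19 \<and> x 20 = snd u * c 18 + snd v * c 19"
    by (auto simp: lin_comb_perp_basis perp_vec_def vec_0_1_20_def algebra_simps)
next
  assume c: "(\<forall>i<18. c i = x (i + 2)) \<and> x 0 = fst u * c 18 + fst v * c 19 \<and> x 20 = snd u * c 18 + snd v * c 19"
  have x1: "x 1 = l * x 20 - k * x 0" and x21: "\<And>j. 21 \<le> j \<Longrightarrow> x j = 0"
    using x perp_vec_0_1_20[OF m] by (auto simp: lvecs_def fst_L2d)
  show "x = lin_comb c (perp_basis l k u v) 20"
  proof
    fix j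
    consider "j = 0" | "j = 1" | "2 \<le> j \<and> j < 20" | "j = 20" | "21 \<le> (j :: nat)"
      by arith
    moreover have "2 \<le> j \<Longrightarrow> Suc (Suc (j - 2)) = j"
      by arith
    ultimately show "x j = lin_comb c (perp_basis l k u v) 20 j"
      by cases (use c x1 x21 in \<open>auto simp: lin_comb_perp_basis perp_vec_def vec_0_1_20_def algebra_simps\<close>)
  qed
qed

lemma perp_vec_0_1_20_unique_coords:
  assumes m: "m \<noteq> 0" "2 * d * b = m * l" and det: "(fst u * snd v - fst v * snd u)\<^sup>2 = 1"
    and x: "x \<in> perp (L2d d) (vec_0_1_20 m (m * k) b)" and M: "fst M = 20"
  shows "\<exists>!c. c \<in> lvecs M \<and> x = lin_comb c (perp_basis l k u v) 20"
proof -
  note represents = perp_eq_lin_comb_perp_basis_iff[OF m x]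
  define \<delta> where "\<delta> = fst u * snd v - fst v * snd u"
  have \<delta>: "\<delta> * \<delta> = 1"
    using det by (simp add: \<delta>_def power2_eq_square)
  text \<open>Cramer's rule for the unimodular 2 x 2 system in the coefficients 18 and 19.\<close>
  define c where "c i = (if i < 18 then x (i + 2)
      else if i = 18 then \<delta> * (snd v * x 0 - fst v * x 20)
      else if i = 19 then \<delta> * (fst u * x 20 - snd u * x 0) else 0)" for i
  have "fst u * c 18 + fst v * c 19 = \<delta> * \<delta> * x 0" "snd u * c 18 + snd v * c 19 = \<delta> * \<delta> * x 20"
    by (simp_all add: c_def \<delta>_def algebra_simps)
  then have "x = lin_comb c (perp_basis l k u v) 20"
    unfolding represents using \<delta> by (simp add: c_def)
  moreover have "c' = c" if "c' \<in> lvecs M" "x = lin_comb c' (perp_basis l k u v) 20" for c'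
  proof
    fix i
    have "x 0 = fst u * c' 18 + fst v * c' 19" "x 20 = snd u * c' 18 + snd v * c' 19"
      "\<forall>i<18. c' i = x (i + 2)"
      using that(2) unfolding represents by simp_all
    then have "c 18 = \<delta> * \<delta> * c' 18" "c 19 = \<delta> * \<delta> * c' 19" "\<forall>i<18. c' i = c i"
      by (simp_all add: c_def \<delta>_def algebra_simps)
    moreover have "c' i = 0" if "20 \<le> i"
      using \<open>c' \<in> lvecs M\<close> M that by (simp add: lvecs_def)
    ultimately show "c' i = c i"
      using \<delta> by (cases "i < 18 \<or> i = 18 \<or> i = 19") (auto simp: c_def)
  qed
  moreover have "c \<in> lvecs M"
    by (simp add: lvecs_def c_def M)
  ultimately show ?thesis
    by blast
qed

lemma sub_iso_perp_vec_0_1_20: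
  assumes m: "m \<noteq> 0" "2 * d * b = m * l" and det: "(fst u * snd v - fst v * snd u)\<^sup>2 = 1"
    and X: "bounded_gram X" "fst X = 2" "snd X 1 0 = snd X 0 1"
    and gram: "bform (-2 * k) l (-2 * d) u u = snd X 0 0" "bform (-2 * k) l (-2 * d) u v = snd X 0 1"
      "bform (-2 * k) l (-2 * d) v v = snd X 1 1"
  shows "sub_iso (L2d d) (perp (L2d d) (vec_0_1_20 m (m * k) b)) (Hyp \<oplus> E8neg \<oplus> E8neg \<oplus> X)"
proof -
  let ?f = "perp_basis l k u v" and ?M = "Hyp \<oplus> E8neg \<oplus> E8neg \<oplus> X"
  have fst_M: "fst ?M = 20"
    using X(2) by (simp add: osum_simps)
  have bil_perp_vec: "bil (L2d d) (perp_vec l k w) (perp_vec l k w') = bform (-2 * k) l (-2 * d) w w'"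
    for w w'
    by (cases w, cases w') (simp add: perp_vec_def bil_vec_0_1_20_vec_0_1_20)
  have "?f i \<in> perp (L2d d) (vec_0_1_20 m (m * k) b)" if "i < 20" for i
    unfolding perp_vec_0_1_20[OF m] using that
    by (auto simp: perp_basis_def perp_vec_def vec_0_1_20_def unit_vec_apply lvecs_def fst_L2d)
  moreover have "bil (L2d d) (?f i) (?f j) = snd ?M i j" if "i < 20" "j < 20" for i j
  proof -
    have "bform (-2 * k) l (-2 * d) v u = bform (-2 * k) l (-2 * d) u v"
      by (cases u, cases v) (simp add: algebra_simps)
    moreover have "bil (L2d d) (unit_vec i') (perp_vec l k w) = 0" "bil (L2d d) (perp_vec l k w) (unit_vec i') = 0"
      if "2 \<le> i'" "i' < 20" for i' w
      using that bil_vec_0_1_20_unit_vec by (auto simp: perp_vec_def bil_commute_L2d[of d "unit_vec i'"])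
    moreover have "bil (L2d d) (unit_vec (i + 2)) (unit_vec (j + 2)) = gram_L2d d (i + 2) (j + 2)"
      if "i < 18" "j < 18"
      using that by (simp add: bil_unit_vec_unit_vec fst_L2d snd_L2d)
    moreover have "i < 18 \<or> i = 18 \<or> i = 19" "j < 18 \<or> j = 18 \<or> j = 19"
      using that by arith+
    ultimately show ?thesis
      using X gram snd_Hyp_E8neg_E8neg_osum[OF X(1) that, of d]
      by (auto simp: perp_basis_def bil_perp_vec)
  qed
  moreover have "\<exists>!c. c \<in> lvecs ?M \<and> x = lin_comb c ?f 20" if "x \<in> perp (L2d d) (vec_0_1_20 m (m * k) b)" for x
    using perp_vec_0_1_20_unique_coords[OF m det that fst_M] .
  ultimately show ?thesis
    unfolding sub_iso_def lin_comb_def fst_M by blast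
qed

lemma bil_self_vec_0_1_20: "bil (L2d d) (vec_0_1_20 m h b) (vec_0_1_20 m h b) = 2 * m * h - 2 * d * b\<^sup>2"
  unfolding bil_vec_0_1_20 by (simp add: vec_0_1_20_def power2_eq_square)

lemma sub_iso_perp_div_2d:
  assumes "d \<noteq> 0" and norm: "bil (L2d d) (vec_0_1_20 (2 * d) (2 * d * k) b) (vec_0_1_20 (2 * d) (2 * d * k) b) = -2 * d"
  shows "sub_iso (L2d d) (perp (L2d d) (vec_0_1_20 (2 * d) (2 * d * k) b)) (Hyp \<oplus> Hyp \<oplus> E8neg \<oplus> E8neg)"
proof -
  have "2 * d * ((-2 * k) * (-2 * d) - b\<^sup>2 + 1) = 0"
    using norm by (simp add: bil_self_vec_0_1_20 algebra_simps power2_eq_square)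
  then have "(-2 * k) * (-2 * d) - b\<^sup>2 = -1"
    using assms(1) by simp
  then obtain u v where uv: "normal_basis (-2 * k) b (-2 * d) u v"
    using normal_basis_exists by blast
  have "sub_iso (L2d d) (perp (L2d d) (vec_0_1_20 (2 * d) (2 * d * k) b)) (Hyp \<oplus> E8neg \<oplus> E8neg \<oplus> Hyp)"
    using assms(1) uv by (intro sub_iso_perp_vec_0_1_20) (auto simp: normal_basis_def osum_simps snd_Hyp)
  then have "sub_iso (L2d d) (perp (L2d d) (vec_0_1_20 (2 * d) (2 * d * k) b)) ((Hyp \<oplus> E8neg \<oplus> E8neg) \<oplus> Hyp)"
    by (simp add: osum_assoc)
  then show ?thesis
    by (rule sub_iso_osum_commute)
qed

lemma sub_iso_perp_div_d:
  assumes "d \<noteq> 0" and norm: "bil (L2d d) (vec_0_1_20 d (d * k) b) (vec_0_1_20 d (d * k) b) = -2 * d"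
  shows "sub_iso (L2d d) (perp (L2d d) (vec_0_1_20 d (d * k) b)) (Hyp \<oplus> E8neg \<oplus> E8neg \<oplus> rk1 2 \<oplus> rk1 (-2))
    \<or> sub_iso (L2d d) (perp (L2d d) (vec_0_1_20 d (d * k) b)) (Hyp \<oplus> E8neg \<oplus> E8neg \<oplus> Hyp2)"
proof -
  have "2 * d * ((- k) * (- d) - b\<^sup>2 + 1) = 0"
    using norm by (simp add: bil_self_vec_0_1_20 algebra_simps power2_eq_square)
  then have "(- k) * (- d) - b\<^sup>2 = -1"
    using assms(1) by simp
  then obtain u v where uv: "normal_basis (- k) b (- d) u v"
    using normal_basis_exists by blast
  have double: "bform (- (2 * k)) (2 * b) (- (2 * d)) w w' = 2 * bform (- k) b (- d) w w'" for w w'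
    by (cases w, cases w') (simp add: algebra_simps)
  text \<open>The form on the rank two part is twice a unimodular one, hence U(2) or <2> + <-2>.\<close>
  show ?thesis
  proof (cases "even k \<and> even d")
    case True
    then show ?thesis
      using assms(1) uv
      by (intro disjI2 sub_iso_perp_vec_0_1_20[where l = "2 * b"])
        (auto simp: normal_basis_def double osum_simps snd_Hyp2)
  next
    case False
    then show ?thesis
      using assms(1) uv
      by (intro disjI1 sub_iso_perp_vec_0_1_20[where l = "2 * b"])
        (auto simp: normal_basis_def double osum_simps snd_rk1)
  qed
qed

theorem proposition4p6:
  fixes d :: int and r :: "nat \<Rightarrow> int"
  assumes "d \<ge> 1"
    and "r \<in> lvecs (L2d d)"
    and "primitive (L2d d) r"
    and "bil (L2d d) r r = -2 * d"
  shows "(ldiv (L2d d) r = 2 * d \<longrightarrow>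
            sub_iso (L2d d) (perp (L2d d) r) (Hyp \<oplus> Hyp \<oplus> E8neg \<oplus> E8neg))
       \<and> (ldiv (L2d d) r = d \<longrightarrow>
            sub_iso (L2d d) (perp (L2d d) r) (Hyp \<oplus> E8neg \<oplus> E8neg \<oplus> rk1 2 \<oplus> rk1 (-2))
          \<or> sub_iso (L2d d) (perp (L2d d) r) (Hyp \<oplus> E8neg \<oplus> E8neg \<oplus> Hyp2))"
proof -
  have "bil (L2d d) r r \<noteq> 0"
    using assms(1,4) by simp
  then obtain k b where orbit: "in_orbit (L2d d) r (vec_0_1_20 (ldiv (L2d d) r) (ldiv (L2d d) r * k) b)"
    using in_orbit_normal_form[OF assms(2)] by blast
  have norm: "bil (L2d d) (vec_0_1_20 (ldiv (L2d d) r) (ldiv (L2d d) r * k) b)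
      (vec_0_1_20 (ldiv (L2d d) r) (ldiv (L2d d) r * k) b) = -2 * d"
    using in_orbit_bil[OF orbit assms(2)] assms(4) by simp
  have "d \<noteq> 0"
    using assms(1) by simp
  show ?thesis
  proof (intro conjI impI)
    assume "ldiv (L2d d) r = 2 * d"
    then show "sub_iso (L2d d) (perp (L2d d) r) (Hyp \<oplus> Hyp \<oplus> E8neg \<oplus> E8neg)"
      using sub_iso_perp_div_2d[OF \<open>d \<noteq> 0\<close>, of k b] norm sub_iso_perp_in_orbit[OF orbit assms(2)]
      by simp
  next
    assume "ldiv (L2d d) r = d"
    then show "sub_iso (L2d d) (perp (L2d d) r) (Hyp \<oplus> E8neg \<oplus> E8neg \<oplus> rk1 2 \<oplus> rk1 (-2))
        \<or> sub_iso (L2d d) (perp (L2d d) r) (Hyp \<oplus> E8neg \<oplus> E8neg \<oplus> Hyp2)"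
      using sub_iso_perp_div_d[OF \<open>d \<noteq> 0\<close>, of k b] norm sub_iso_perp_in_orbit[OF orbit assms(2)]
      by (simp, blast)
  qed
qed

end
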